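(* Let $n$ be large, $R$ an integer with $1\le R\le\frac{\log n}{24\log\log n}$, $L=6R$ and $\eta=n^{1/(2L)}$. Let $\ell\in\{0,\ldots,L\}$ and $q$ an integer with $q\in\left[\eta^3,\frac{\eta^{2\ell-1}}{2^7}\right]$. Let $\sigma^A$ be any probability distribution with support $S_\ell^A$. If $\mu^A\sim\sigma^A$ and, conditionally on $\mu^A$, $\Theta=(\Theta_1,\ldots,\Theta_q)\sim\mathrm{Ber}(\mu^A)^{\otimes q}$, then $\Pr[\Theta\notin G_\ell^A]\le n^{-10}$.
   Context: For $\ell\in\{0,\ldots,L\}$, $S_\ell^A$ is the set of all numbers $\frac12+2\sum_{k:\,1\le2k+1\le\ell}\eta^{-(2k+1)}+2\sum_{k:\,\ell<2k+1\le L}X_{2k+1}\eta^{-(2k+1)}$ with all $X_{2k+1}\in\{0,1\}$. For $\theta\in\{0,1\}^q$ and $x\in(0,1)$, $p(\theta\mid x)=\prod_{j=1}^qx^{\theta_j}(1-x)^{1-\theta_j}$. $G_\ell^A$ is the set of sequences $\theta$ (of any length) such that for all $x,y\in S_\ell^A$, $\frac{p(\theta\mid x)}{p(\theta\mid y)}\in[e^{-4/\eta},e^{4/\eta}]$. $\mathrm{Ber}(x)$ denotes the Bernoulli distribution with mean $x$. *)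

theory Defs
  imports "HOL-Probability.Probability"
begin

text \<open>The set S_l^A (for parameters eta, L, l). Odd indices j = 2k+1.
  The free bits X_j are modelled by a function X :: nat => bool (only the
  values at odd j with l < j <= L matter).\<close>
definition SA :: "real \<Rightarrow> nat \<Rightarrow> nat \<Rightarrow> real set" where
  "SA \<eta> L l = {1/2 + 2 * (\<Sum>j\<in>{j. odd j \<and> 1 \<le> j \<and> j \<le> l}. \<eta> powr (- real j))
      + 2 * (\<Sum>j\<in>{j. odd j \<and> l < j \<and> j \<le> L}. (if X j then 1 else 0) * \<eta> powr (- real j))
      | X :: nat \<Rightarrow> bool. True}"

definition pcond :: "bool list \<Rightarrow> real \<Rightarrow> real" where
  "pcond \<theta> x = prod_list (map (\<lambda>b. if b then x else 1 - x) \<theta>)"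

definition GA :: "real \<Rightarrow> nat \<Rightarrow> nat \<Rightarrow> bool list set" where
  "GA \<eta> L l = {\<theta>. \<forall>x\<in>SA \<eta> L l. \<forall>y\<in>SA \<eta> L l.
      pcond \<theta> x / pcond \<theta> y \<in> {exp (- 4 / \<eta>) .. exp (4 / \<eta>)}}"

end

theory Submission
  imports Defs
begin

(* If x, y are points of S_l^A and theta has k ones among q trials, then
   ln (p(theta|x) / p(theta|y)) = k ln (x/y) + (q - k) ln ((1-x)/(1-y))
     = (k - q mu) (ln (x/y) - ln ((1-x)/(1-y))) + q (mu ln (x/y) + (1-mu) ln ((1-x)/(1-y))).
   All points of S_l^A lie in [1/2, 3/4] within distance D = 3 eta^-(l+1) of each other, so the
   first term is O(D |k - q mu|) and the second, a difference of two Kullback-Leibler divergences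
   from Ber(mu), is O(q D^2).  With q <= eta^(2l-1)/2^7 both are at most 2/eta as soon as
   |k - q mu| <= eta^l/9.  Given mu, k is binomial, so Hoeffding bounds the remaining probability
   by 2 exp(-3 eta); the constraint on R gives eta >= (ln n)^2, hence 2 exp(-3 eta) <= n^-10. *)

lemma sum_power_le_geometric:
  fixes r :: real
  assumes "0 \<le> r" "r < 1" "finite S" "S \<subseteq> {a..}"
  shows "(\<Sum>j\<in>S. r ^ j) \<le> r ^ a / (1 - r)"
proof -
  define b where "b = Max (insert a S)"
  have "a \<le> b" unfolding b_def using assms(3) by simp
  have "S \<subseteq> {a..b}" unfolding b_def using assms(3,4) by auto
  then have "(\<Sum>j\<in>S. r ^ j) \<le> (\<Sum>j\<in>{a..b}. r ^ j)"
    using assms(1) by (intro sum_mono2) auto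
  also have "\<dots> = (r ^ a - r ^ Suc b) / (1 - r)"
    using sum_gp_multiplied[OF \<open>a \<le> b\<close>, of r] assms(2) by (simp add: field_simps)
  also have "\<dots> \<le> r ^ a / (1 - r)"
    using assms(1,2) by (intro divide_right_mono) auto
  finally show ?thesis .
qed

definition SA_base :: "real \<Rightarrow> nat \<Rightarrow> real" where
  "SA_base \<eta> l = 1/2 + 2 * (\<Sum>j | odd j \<and> 1 \<le> j \<and> j \<le> l. (1/\<eta>) ^ j)"

lemma powr_minus_real_eq_power: "0 < \<eta> \<Longrightarrow> \<eta> powr (- real j) = (1/\<eta>) ^ j"
  by (simp add: powr_minus powr_realpow power_one_over inverse_eq_divide)

lemma SA_subset_interval:
  assumes "\<eta> \<ge> 3"
  shows "SA \<eta> L l \<subseteq> {SA_base \<eta> l .. SA_base \<eta> l + 3 * (1/\<eta>) ^ (l + 1)}"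
proof
  fix x assume "x \<in> SA \<eta> L l"
  then obtain X where x: "x = 1/2 + 2 * (\<Sum>j | odd j \<and> 1 \<le> j \<and> j \<le> l. \<eta> powr (- real j))
      + 2 * (\<Sum>j | odd j \<and> l < j \<and> j \<le> L. (if X j then 1 else 0) * \<eta> powr (- real j))"
    unfolding SA_def by blast
  define F where "F = {j. odd j \<and> l < j \<and> j \<le> L}"
  define B where "B = (\<Sum>j\<in>F. (if X j then 1 else 0) * (1/\<eta>) ^ j)"
  have "\<eta> > 0" "1/\<eta> \<le> 1/3" "1/\<eta> < 1" using assms by auto
  have "finite F" unfolding F_def by (rule finite_subset[of _ "{..L}"]) auto
  have x_eq: "x = SA_base \<eta> l + 2 * B"
    unfolding x B_def F_def SA_base_def using \<open>\<eta> > 0\<close> by (simp add: powr_minus_real_eq_power)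
  have "0 \<le> B" unfolding B_def using \<open>\<eta> > 0\<close> by (intro sum_nonneg) auto
  have "B \<le> (\<Sum>j\<in>F. (1/\<eta>) ^ j)" unfolding B_def using \<open>\<eta> > 0\<close> by (intro sum_mono) auto
  also have "\<dots> \<le> (1/\<eta>) ^ (l + 1) / (1 - 1/\<eta>)"
    using \<open>\<eta> > 0\<close> \<open>1/\<eta> < 1\<close> \<open>finite F\<close> by (intro sum_power_le_geometric) (auto simp: F_def)
  also have "\<dots> \<le> (1/\<eta>) ^ (l + 1) / (2/3)"
    using \<open>\<eta> > 0\<close> \<open>1/\<eta> \<le> 1/3\<close> by (intro frac_le) auto
  finally show "x \<in> {SA_base \<eta> l .. SA_base \<eta> l + 3 * (1/\<eta>) ^ (l + 1)}"
    using x_eq \<open>0 \<le> B\<close> by simp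
qed

lemma SA_base_bounds:
  assumes "\<eta> \<ge> 3"
  shows "1/2 \<le> SA_base \<eta> l" "SA_base \<eta> l \<le> 1/2 + 3/\<eta>"
proof -
  have "\<eta> > 0" "1/\<eta> \<le> 1/3" "1/\<eta> < 1" using assms by auto
  have "0 \<le> (\<Sum>j | odd j \<and> 1 \<le> j \<and> j \<le> l. (1/\<eta>) ^ j)"
    using \<open>\<eta> > 0\<close> by (intro sum_nonneg) auto
  then show "1/2 \<le> SA_base \<eta> l" unfolding SA_base_def by simp
  have "(\<Sum>j | odd j \<and> 1 \<le> j \<and> j \<le> l. (1/\<eta>) ^ j) \<le> (1/\<eta>) ^ 1 / (1 - 1/\<eta>)"
    using \<open>\<eta> > 0\<close> \<open>1/\<eta> < 1\<close> by (intro sum_power_le_geometric) auto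
  also have "\<dots> \<le> (1/\<eta>) / (2/3)"
    using \<open>\<eta> > 0\<close> \<open>1/\<eta> \<le> 1/3\<close> by (intro frac_le) auto
  finally show "SA_base \<eta> l \<le> 1/2 + 3/\<eta>" unfolding SA_base_def by simp
qed

lemma SA_bounds:
  assumes "\<eta> \<ge> 24" "x \<in> SA \<eta> L l"
  shows "1/2 \<le> x" "x \<le> 3/4"
proof -
  have x: "SA_base \<eta> l \<le> x" "x \<le> SA_base \<eta> l + 3 * (1/\<eta>) ^ (l + 1)"
    using SA_subset_interval[of \<eta> L l] assms by auto
  have "(1/\<eta>) ^ (l + 1) \<le> (1/\<eta>) ^ 1"
    using assms(1) by (intro power_decreasing) auto
  then have "3 * (1/\<eta>) ^ (l + 1) \<le> 3/\<eta>" by simp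
  moreover have "3/\<eta> \<le> 1/8" using assms(1) by (simp add: field_simps)
  moreover have "1/2 \<le> SA_base \<eta> l" "SA_base \<eta> l \<le> 1/2 + 3/\<eta>"
    using SA_base_bounds assms(1) by auto
  ultimately show "1/2 \<le> x" "x \<le> 3/4"
    using x by linarith+
qed

lemma SA_diameter:
  assumes "\<eta> \<ge> 3" "x \<in> SA \<eta> L l" "y \<in> SA \<eta> L l"
  shows "\<bar>x - y\<bar> \<le> 3 * (1/\<eta>) ^ (l + 1)"
proof -
  have "x \<in> {SA_base \<eta> l .. SA_base \<eta> l + 3 * (1/\<eta>) ^ (l + 1)}"
    "y \<in> {SA_base \<eta> l .. SA_base \<eta> l + 3 * (1/\<eta>) ^ (l + 1)}"
    using SA_subset_interval[OF assms(1), of L l] assms(2,3) by blast+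
  then show ?thesis by (simp add: abs_le_iff)
qed

lemma ln_divide_le:
  fixes x y a :: real
  assumes "0 < x" "0 < a" "a \<le> y"
  shows "ln (x / y) \<le> \<bar>x - y\<bar> / a"
proof -
  have "ln (x / y) \<le> x / y - 1" using assms by (intro ln_le_minus_one) auto
  also have "\<dots> = (x - y) / y" using assms by (simp add: field_simps)
  also have "\<dots> \<le> \<bar>x - y\<bar> / y" using assms by (intro divide_right_mono) auto
  also have "\<dots> \<le> \<bar>x - y\<bar> / a" using assms by (intro frac_le) auto
  finally show ?thesis .
qed

lemma abs_ln_divide_le:
  fixes x y a :: real
  assumes "0 < a" "a \<le> x" "a \<le> y"
  shows "\<bar>ln (x / y)\<bar> \<le> \<bar>x - y\<bar> / a"
proof -
  have "ln (y / x) = - ln (x / y)" using assms by (simp add: ln_div)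
  moreover have "ln (y / x) \<le> \<bar>y - x\<bar> / a" using assms by (intro ln_divide_le) auto
  moreover have "ln (x / y) \<le> \<bar>x - y\<bar> / a" using assms by (intro ln_divide_le) auto
  ultimately show ?thesis by (simp add: abs_minus_commute)
qed

lemma weighted_ln_ratio_le:
  fixes x y m :: real
  assumes "0 < x" "x < 1" "1/4 \<le> y" "y \<le> 3/4" "0 \<le> m" "m \<le> 1"
  shows "m * ln (x / y) + (1 - m) * ln ((1 - x) / (1 - y)) \<le> 6 * \<bar>x - y\<bar> * \<bar>m - y\<bar>"
proof -
  have "m * ln (x / y) \<le> m * ((x - y) / y)"
    using assms ln_le_minus_one[of "x / y"] by (intro mult_left_mono) (auto simp: field_simps)
  moreover have "(1 - m) * ln ((1 - x) / (1 - y)) \<le> (1 - m) * ((y - x) / (1 - y))"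
    using assms ln_le_minus_one[of "(1 - x) / (1 - y)"]
    by (intro mult_left_mono) (auto simp: field_simps)
  moreover have "m * ((x - y) / y) + (1 - m) * ((y - x) / (1 - y)) = (x - y) * (m - y) / (y * (1 - y))"
    using assms by (simp add: field_simps)
  moreover have "(x - y) * (m - y) / (y * (1 - y)) \<le> 6 * \<bar>x - y\<bar> * \<bar>m - y\<bar>"
  proof -
    have "0 \<le> (y - 1/4) * (3/4 - y)" using assms by (intro mult_nonneg_nonneg) auto
    then have "3/16 \<le> y * (1 - y)" by (simp add: field_simps)
    have "(x - y) * (m - y) / (y * (1 - y)) \<le> \<bar>x - y\<bar> * \<bar>m - y\<bar> / (y * (1 - y))"
      using \<open>3/16 \<le> y * (1 - y)\<close> by (intro divide_right_mono) (auto simp: abs_mult[symmetric])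
    also have "\<dots> \<le> \<bar>x - y\<bar> * \<bar>m - y\<bar> / (3/16)"
      using \<open>3/16 \<le> y * (1 - y)\<close> by (intro frac_le) auto
    also have "\<dots> \<le> 6 * \<bar>x - y\<bar> * \<bar>m - y\<bar>" by simp
    finally show ?thesis .
  qed
  ultimately show ?thesis by linarith
qed

lemma log_likelihood_ratio_le:
  fixes x y m D T :: real and k q :: nat
  assumes "x \<in> {1/2..3/4}" "y \<in> {1/2..3/4}" "m \<in> {1/2..3/4}"
    and "\<bar>x - y\<bar> \<le> D" "\<bar>m - y\<bar> \<le> D" "\<bar>m - x\<bar> \<le> D"
    and "\<bar>real k - real q * m\<bar> \<le> T"
  shows "\<bar>real k * ln (x / y) + (real q - real k) * ln ((1 - x) / (1 - y))\<bar>
    \<le> 6 * D * T + 6 * real q * D\<^sup>2"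
proof -
  define a where "a = ln (x / y)"
  define b where "b = ln ((1 - x) / (1 - y))"
  have "\<bar>a\<bar> \<le> \<bar>x - y\<bar> / (1/2)" unfolding a_def using assms by (intro abs_ln_divide_le) auto
  moreover have "\<bar>b\<bar> \<le> \<bar>(1 - x) - (1 - y)\<bar> / (1/4)"
    unfolding b_def using assms by (intro abs_ln_divide_le) auto
  ultimately have "\<bar>a - b\<bar> \<le> 6 * D"
    using assms(4) abs_triangle_ineq4[of a b] by (simp add: abs_minus_commute)
  then have first_order: "\<bar>(real k - real q * m) * (a - b)\<bar> \<le> 6 * D * T"
    using mult_mono[OF assms(7) \<open>\<bar>a - b\<bar> \<le> 6 * D\<close>] assms(7)
    by (simp add: abs_mult mult_ac)
  have "m * a + (1 - m) * b \<le> 6 * D\<^sup>2"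
    using weighted_ln_ratio_le[of x y m] assms mult_mono[of "\<bar>x - y\<bar>" D "\<bar>m - y\<bar>" D]
    unfolding a_def b_def by (auto simp: power2_eq_square)
  moreover have "m * ln (y / x) + (1 - m) * ln ((1 - y) / (1 - x)) \<le> 6 * D\<^sup>2"
    using weighted_ln_ratio_le[of y x m] assms mult_mono[of "\<bar>y - x\<bar>" D "\<bar>m - x\<bar>" D]
    by (auto simp: power2_eq_square abs_minus_commute)
  moreover have "ln (y / x) = - a" "ln ((1 - y) / (1 - x)) = - b"
    unfolding a_def b_def using assms by (auto simp: ln_div)
  ultimately have "\<bar>m * a + (1 - m) * b\<bar> \<le> 6 * D\<^sup>2" by auto
  from mult_left_mono[OF this, of "real q"]
  have drift: "\<bar>real q * (m * a + (1 - m) * b)\<bar> \<le> 6 * real q * D\<^sup>2"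
    by (simp add: abs_mult mult_ac)
  have "real k * a + (real q - real k) * b
      = (real k - real q * m) * (a - b) + real q * (m * a + (1 - m) * b)"
    by (simp add: algebra_simps)
  then show ?thesis using first_order drift unfolding a_def b_def by linarith
qed

lemma pcond_eq_power:
  "pcond \<theta> x = x ^ length (filter id \<theta>) * (1 - x) ^ (length \<theta> - length (filter id \<theta>))"
proof (induction \<theta>)
  case Nil
  then show ?case by (simp add: pcond_def)
next
  case (Cons b \<theta>)
  have "length (filter id \<theta>) \<le> length \<theta>" by (rule length_filter_le)
  then show ?case using Cons by (cases b) (simp_all add: pcond_def Suc_diff_le)
qed

lemma pcond_divide_eq_exp:
  fixes x y :: real
  assumes "0 < x" "x < 1" "0 < y" "y < 1"
  shows "pcond \<theta> x / pcond \<theta> y = exp (real (length (filter id \<theta>)) * ln (x / y)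
      + (real (length \<theta>) - real (length (filter id \<theta>))) * ln ((1 - x) / (1 - y)))"
proof -
  define k where "k = length (filter id \<theta>)"
  define q where "q = length \<theta>"
  have "k \<le> q" unfolding k_def q_def by (rule length_filter_le)
  have "pcond \<theta> x / pcond \<theta> y = (x / y) ^ k * ((1 - x) / (1 - y)) ^ (q - k)"
    unfolding pcond_eq_power k_def[symmetric] q_def[symmetric] by (simp add: power_divide)
  also have "\<dots> = exp (real k * ln (x / y)) * exp (real (q - k) * ln ((1 - x) / (1 - y)))"
    using assms by (simp add: powr_realpow[symmetric] powr_def)
  finally show ?thesis
    unfolding k_def[symmetric] q_def[symmetric] using \<open>k \<le> q\<close> by (simp add: exp_add)
qed

lemma likelihood_error_le:
  fixes \<eta> :: real and q l :: nat
  assumes "1 \<le> \<eta>" "real q \<le> \<eta> ^ (2 * l) / (128 * \<eta>)"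
  shows "6 * (3 * (1/\<eta>) ^ (l + 1)) * (\<eta> ^ l / 9) + 6 * real q * (3 * (1/\<eta>) ^ (l + 1))\<^sup>2 \<le> 4/\<eta>"
proof -
  define w where "w = \<eta> ^ l"
  have "0 < \<eta>" "0 < w" unfolding w_def using assms(1) by auto
  have D: "(1/\<eta>) ^ (l + 1) = 1 / (\<eta> * w)" unfolding w_def by (simp add: power_one_over)
  have "6 * real q * (3 * (1/\<eta>) ^ (l + 1))\<^sup>2 = 54 * real q / (\<eta>\<^sup>2 * w\<^sup>2)"
    unfolding D by (simp add: field_simps power2_eq_square)
  also have "\<dots> \<le> 54 * (w\<^sup>2 / (128 * \<eta>)) / (\<eta>\<^sup>2 * w\<^sup>2)"
    using assms(2) \<open>0 < \<eta>\<close> \<open>0 < w\<close> unfolding w_def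
    by (intro divide_right_mono mult_left_mono) (auto simp: power_mult power2_eq_square mult_ac)
  also have "\<dots> = (27/64) / \<eta> ^ 3"
    using \<open>0 < \<eta>\<close> \<open>0 < w\<close> by (simp add: field_simps power2_eq_square power3_eq_cube)
  also have "\<dots> \<le> 2 / \<eta>"
    using assms(1) mult_mono[of 1 \<eta> 1 \<eta>] by (simp add: field_simps power3_eq_cube)
  finally have "6 * real q * (3 * (1/\<eta>) ^ (l + 1))\<^sup>2 \<le> 2 / \<eta>" .
  moreover have "6 * (3 * (1/\<eta>) ^ (l + 1)) * (\<eta> ^ l / 9) = 2 / \<eta>"
    unfolding D w_def[symmetric] using \<open>0 < w\<close> by (simp add: field_simps)
  ultimately show ?thesis by linarith
qed

lemma in_GA_if_count_near_mean:
  fixes \<eta> :: real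
  assumes "24 \<le> \<eta>" "\<mu> \<in> SA \<eta> L l" and q: "real (length \<theta>) \<le> \<eta> ^ (2 * l) / (128 * \<eta>)"
    and deviation: "\<bar>real (length (filter id \<theta>)) - real (length \<theta>) * \<mu>\<bar> \<le> \<eta> ^ l / 9"
  shows "\<theta> \<in> GA \<eta> L l"
  unfolding GA_def
proof (intro CollectI ballI)
  fix x y assume "x \<in> SA \<eta> L l" "y \<in> SA \<eta> L l"
  define D where "D = 3 * (1/\<eta>) ^ (l + 1)"
  define r where "r = real (length (filter id \<theta>)) * ln (x / y)
    + (real (length \<theta>) - real (length (filter id \<theta>))) * ln ((1 - x) / (1 - y))"
  have in_range: "x \<in> {1/2..3/4}" "y \<in> {1/2..3/4}" "\<mu> \<in> {1/2..3/4}"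
    using SA_bounds assms(1,2) \<open>x \<in> SA \<eta> L l\<close> \<open>y \<in> SA \<eta> L l\<close> by auto
  have "\<bar>x - y\<bar> \<le> D" "\<bar>\<mu> - y\<bar> \<le> D" "\<bar>\<mu> - x\<bar> \<le> D"
    unfolding D_def using SA_diameter[of \<eta>] assms(1,2) \<open>x \<in> SA \<eta> L l\<close> \<open>y \<in> SA \<eta> L l\<close>
    by simp_all
  then have "\<bar>r\<bar> \<le> 6 * D * (\<eta> ^ l / 9) + 6 * real (length \<theta>) * D\<^sup>2"
    unfolding r_def using in_range deviation by (intro log_likelihood_ratio_le) auto
  also have "\<dots> \<le> 4 / \<eta>" unfolding D_def using assms(1) q by (intro likelihood_error_le) auto
  finally have "\<bar>r\<bar> \<le> 4 / \<eta>" .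
  moreover have "pcond \<theta> x / pcond \<theta> y = exp r"
    unfolding r_def using in_range by (intro pcond_divide_eq_exp) auto
  ultimately show "pcond \<theta> x / pcond \<theta> y \<in> {exp (- 4 / \<eta>) .. exp (4 / \<eta>)}" by auto
qed

lemma prob_replicate_bernoulli_notin_GA:
  fixes \<eta> :: real
  assumes "24 \<le> \<eta>" "\<mu> \<in> SA \<eta> L l" "0 < q" and q: "real q \<le> \<eta> ^ (2 * l) / (128 * \<eta>)"
  shows "measure_pmf.prob (replicate_pmf q (bernoulli_pmf \<mu>)) {\<Theta>. \<Theta> \<notin> GA \<eta> L l}
    \<le> 2 * exp (- 3 * \<eta>)"
proof -
  define P where "P = replicate_pmf q (bernoulli_pmf \<mu>)"
  define count where "count = (length \<circ> filter id :: bool list \<Rightarrow> nat)"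
  define \<epsilon> where "\<epsilon> = \<eta> ^ l / 9"
  define far where "far = {k. \<epsilon> \<le> \<bar>real k - real q * \<mu>\<bar>}"
  have "\<mu> \<in> {0..1}" using SA_bounds[OF assms(1,2)] by simp
  have "{\<Theta>. \<Theta> \<notin> GA \<eta> L l} \<inter> set_pmf P \<subseteq> count -` far"
  proof (rule subsetI, rule ccontr)
    fix \<Theta> assume \<Theta>: "\<Theta> \<in> {\<Theta>. \<Theta> \<notin> GA \<eta> L l} \<inter> set_pmf P" "\<Theta> \<notin> count -` far"
    then have "length \<Theta> = q" unfolding P_def by (simp add: set_replicate_pmf)
    then have "\<Theta> \<in> GA \<eta> L l"
      using \<Theta>(2) assms(1,2) q unfolding count_def far_def \<epsilon>_def
      by (intro in_GA_if_count_near_mean) auto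
    then show False using \<Theta>(1) by simp
  qed
  then have "measure_pmf.prob P {\<Theta>. \<Theta> \<notin> GA \<eta> L l} \<le> measure_pmf.prob P (count -` far)"
    by (subst measure_Int_set_pmf[symmetric]) (intro measure_pmf.finite_measure_mono, auto)
  also have "\<dots> = measure_pmf.prob (binomial_pmf q \<mu>) far"
    unfolding binomial_pmf_altdef[OF \<open>\<mu> \<in> {0..1}\<close>] P_def count_def by simp
  also have "\<dots> \<le> 2 * exp (- 2 * \<epsilon>\<^sup>2 / real q)"
    unfolding far_def using assms(1,3) \<open>\<mu> \<in> {0..1}\<close> unfolding \<epsilon>_def
    by (intro binomial_distribution.prob_abs_ge) (auto simp: binomial_distribution_def)
  also have "\<dots> \<le> 2 * exp (- 3 * \<eta>)"
  proof -
    have "3 * \<eta> * real q \<le> 3 * \<eta> * (\<eta> ^ (2 * l) / (128 * \<eta>))"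
      using q assms(1) by (intro mult_left_mono) auto
    also have "\<dots> \<le> 2 * \<epsilon>\<^sup>2"
      using assms(1) unfolding \<epsilon>_def by (simp add: field_simps power_mult power2_eq_square)
    finally have "3 * \<eta> \<le> 2 * \<epsilon>\<^sup>2 / real q" using assms(3) by (simp add: field_simps)
    then show ?thesis by simp
  qed
  finally show ?thesis unfolding P_def .
qed

lemma measure_bind_pmf_le:
  fixes c :: real
  assumes "\<And>x. x \<in> set_pmf p \<Longrightarrow> measure_pmf.prob (f x) A \<le> c" "0 \<le> c"
  shows "measure_pmf.prob (bind_pmf p f) A \<le> c"
proof -
  have "emeasure (measure_pmf (bind_pmf p f)) A = (\<integral>\<^sup>+x. emeasure (f x) A \<partial>p)" by simp
  also have "\<dots> \<le> (\<integral>\<^sup>+x. ennreal c \<partial>p)"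
    by (intro nn_integral_mono_AE AE_pmfI) (use assms in \<open>simp add: measure_pmf.emeasure_eq_measure\<close>)
  also have "\<dots> = ennreal c" by (simp add: measure_pmf.emeasure_space_1)
  finally show ?thesis by (simp add: measure_pmf.emeasure_eq_measure assms)
qed

lemma ln_squared_le_root:
  fixes x r :: real
  assumes "0 < x" "1 < ln x" "0 < r" "r \<le> ln x / (24 * ln (ln x))"
  shows "(ln x)\<^sup>2 \<le> x powr (1 / (12 * r))"
proof -
  have "0 < ln (ln x)" using assms(2) by simp
  then have "2 * ln (ln x) \<le> ln x / (12 * r)"
    using assms(3,4) by (simp add: field_simps)
  then have "exp (2 * ln (ln x)) \<le> exp (ln x / (12 * r))" by simp
  moreover have "exp (2 * ln (ln x)) = (ln x)\<^sup>2"
    using assms(2) by (simp add: exp_of_nat_mult[of 2 "ln (ln x)", simplified])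
  ultimately show ?thesis using assms(1) by (simp add: powr_def)
qed

lemma five_le_ln:
  fixes x :: real
  assumes "243 \<le> x"
  shows "5 \<le> ln x"
proof -
  have "ln 243 \<le> ln x" using assms by simp
  then have "5 * ln 3 \<le> ln x" using ln_realpow[of 3 5] by simp
  then show ?thesis using exp_le ln_ge_iff[of 3 1] by simp
qed

lemma two_exp_le_powr:
  fixes x \<eta> :: real
  assumes "0 < x" "5 \<le> ln x" "(ln x)\<^sup>2 \<le> \<eta>"
  shows "2 * exp (- 3 * \<eta>) \<le> x powr (- 10)"
proof -
  have "5 * ln x \<le> (ln x)\<^sup>2" using assms(2) by (simp add: power2_eq_square)
  then have "ln 2 - 3 * \<eta> \<le> - 10 * ln x" using assms(2,3) ln_2_less_1 by linarith
  then have "exp (ln 2 - 3 * \<eta>) \<le> exp (- 10 * ln x)" by simp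
  then show ?thesis using assms(1) by (simp add: exp_diff powr_def exp_minus field_simps)
qed

theorem lemma7:
  shows "\<exists>N::nat. \<forall>n\<ge>N. \<forall>(R::nat) (l::nat) (q::nat) (\<sigma>::real pmf).
    1 \<le> R \<longrightarrow> real R \<le> ln (real n) / (24 * ln (ln (real n))) \<longrightarrow>
    l \<le> 6 * R \<longrightarrow>
    (real n powr (1 / (2 * real (6 * R)))) ^ 3 \<le> real q \<longrightarrow>
    real q \<le> (real n powr (1 / (2 * real (6 * R)))) powr (2 * real l - 1) / 2 ^ 7 \<longrightarrow>
    set_pmf \<sigma> = SA (real n powr (1 / (2 * real (6 * R)))) (6 * R) l \<longrightarrow>
    measure_pmf.prob (bind_pmf \<sigma> (\<lambda>\<mu>. replicate_pmf q (bernoulli_pmf \<mu>)))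
       {\<Theta>. \<Theta> \<notin> GA (real n powr (1 / (2 * real (6 * R)))) (6 * R) l}
      \<le> real n powr (- 10)"
proof (intro exI[of _ 243] allI impI)
  fix n R l q :: nat and \<sigma> :: "real pmf"
  assume "243 \<le> n" "1 \<le> R" "real R \<le> ln (real n) / (24 * ln (ln (real n)))"
    and q: "(real n powr (1 / (2 * real (6 * R)))) ^ 3 \<le> real q"
      "real q \<le> (real n powr (1 / (2 * real (6 * R)))) powr (2 * real l - 1) / 2 ^ 7"
    and support: "set_pmf \<sigma> = SA (real n powr (1 / (2 * real (6 * R)))) (6 * R) l"
  define \<eta> where "\<eta> = real n powr (1 / (2 * real (6 * R)))"
  note q = q[folded \<eta>_def] and support = support[folded \<eta>_def]
  have ln_n: "5 \<le> ln (real n)" using \<open>243 \<le> n\<close> by (intro five_le_ln) simp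
  then have "(ln (real n))\<^sup>2 \<le> \<eta>"
    unfolding \<eta>_def using \<open>1 \<le> R\<close> \<open>real R \<le> _\<close> \<open>243 \<le> n\<close>
      ln_squared_le_root[of "real n" "real R"] by simp
  moreover have "25 \<le> (ln (real n))\<^sup>2" using ln_n power_mono[of 5 "ln (real n)" 2] by simp
  ultimately have "24 \<le> \<eta>" by simp
  then have "1 \<le> \<eta> ^ 3" by (intro one_le_power) simp
  then have "0 < q" using q(1) by simp
  have "\<eta> powr (2 * real l - 1) = \<eta> ^ (2 * l) / \<eta>"
    using \<open>24 \<le> \<eta>\<close> by (simp add: powr_diff powr_realpow[symmetric])
  then have "real q \<le> \<eta> ^ (2 * l) / (128 * \<eta>)" using q(2) by simp
  then have "measure_pmf.prob (bind_pmf \<sigma> (\<lambda>\<mu>. replicate_pmf q (bernoulli_pmf \<mu>)))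
      {\<Theta>. \<Theta> \<notin> GA \<eta> (6 * R) l} \<le> 2 * exp (- 3 * \<eta>)"
    using support \<open>24 \<le> \<eta>\<close> \<open>0 < q\<close>
    by (intro measure_bind_pmf_le prob_replicate_bernoulli_notin_GA) auto
  also have "\<dots> \<le> real n powr (- 10)"
    using \<open>243 \<le> n\<close> ln_n \<open>(ln (real n))\<^sup>2 \<le> \<eta>\<close> by (intro two_exp_le_powr) auto
  finally show "measure_pmf.prob (bind_pmf \<sigma> (\<lambda>\<mu>. replicate_pmf q (bernoulli_pmf \<mu>)))
      {\<Theta>. \<Theta> \<notin> GA (real n powr (1 / (2 * real (6 * R)))) (6 * R) l} \<le> real n powr (- 10)"
    unfolding \<eta>_def .
qed

end
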